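(* Let $n\ge2$ and $p,u,v\in\mathbb R^{n-1}$, and let $P:\mathbb R^n\to\mathbb R^{n-1}$ be the projection onto the first $n-1$ coordinates. Then there exist $a,b\in\mathbb R^n$ such that the lens $L=B(a,1)\cap B(b,1)$ can be written as $L=\{(x,z): x\in P(L),\ f(x)\le z\le g(x)\}$ for a convex function $f$ and a concave function $g$ on $P(L)$, with $p$ in the interior of $P(L)$, $f,g$ differentiable at $p$, $\nabla f(p)=u$ and $\nabla g(p)=v$.
   Context: For $a\in\mathbb R^n$, $B(a,1)$ is the closed Euclidean unit ball centered at $a$. A lens is an intersection of two closed Euclidean unit balls. *)

theory Defs
  imports "HOL-Analysis.Analysis"
begin

end

theory Submission
  imports Defs
begin

text \<open>Put the centre of the first ball at height 0 above the point p + \<alpha> v of the base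
  hyperplane and that of the second one at height h above p - \<beta> u, where
  \<alpha> = 1 / sqrt (1 + |v|^2) and \<beta> = 1 / sqrt (1 + |u|^2). Then the upper hemisphere of the
  first ball has gradient v over p and the lower hemisphere of the second one has gradient u
  over p. For h = max \<alpha> \<beta> we have -\<alpha> < h - \<beta> < \<alpha> < h + \<beta>, so these two caps are the
  strict bottom and top of the lens over p, hence near p. The boundary functions of any
  convex set between two graphs are convex and concave respectively.\<close>

lemma convex_between_graphs_imp_convex_concave:
  fixes L :: "('a::real_vector \<times> real) set"
  assumes "convex L"
    and L_eq: "L = {(x, z). x \<in> fst ` L \<and> f x \<le> z \<and> z \<le> g x}"
  shows "convex_on (fst ` L) f \<and> concave_on (fst ` L) g"
proof -
  have convex_shadow: "convex (fst ` L)"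
    using \<open>convex L\<close> by (simp add: convex_linear_image linear_fst)
  have mem_L: "(x, z) \<in> L \<longleftrightarrow> x \<in> fst ` L \<and> f x \<le> z \<and> z \<le> g x" for x z
    using L_eq by blast
  have lower_in: "(x, f x) \<in> L" and upper_in: "(x, g x) \<in> L" if "x \<in> fst ` L" for x
    using that mem_L by force+
  have combination_in: "(s *\<^sub>R x + t *\<^sub>R y, s * zx + t * zy) \<in> L"
    if "(x, zx) \<in> L" "(y, zy) \<in> L" "s \<ge> 0" "t \<ge> 0" "s + t = 1" for x y zx zy s t
    using \<open>convex L\<close> that unfolding convex_def by fastforce
  have "convex_on (fst ` L) f"
    unfolding convex_on_def
  proof (intro conjI convex_shadow ballI allI impI)
    fix x y s t
    assume "x \<in> fst ` L" "y \<in> fst ` L" "(0::real) \<le> s" "0 \<le> t" "s + t = 1"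
    then have "(s *\<^sub>R x + t *\<^sub>R y, s * f x + t * f y) \<in> L"
      by (intro combination_in lower_in)
    then show "f (s *\<^sub>R x + t *\<^sub>R y) \<le> s * f x + t * f y"
      using mem_L by blast
  qed
  moreover have "concave_on (fst ` L) g"
    unfolding concave_on_def convex_on_def
  proof (intro conjI convex_shadow ballI allI impI)
    fix x y s t
    assume "x \<in> fst ` L" "y \<in> fst ` L" "(0::real) \<le> s" "0 \<le> t" "s + t = 1"
    then have "(s *\<^sub>R x + t *\<^sub>R y, s * g x + t * g y) \<in> L"
      by (intro combination_in upper_in)
    then show "- g (s *\<^sub>R x + t *\<^sub>R y) \<le> s * - g x + t * - g y"
      using mem_L by auto
  qed
  ultimately show ?thesis ..
qed

definition hemisphere :: "'a::real_inner \<Rightarrow> 'a \<Rightarrow> real" where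
  "hemisphere c x = sqrt (1 - (x - c) \<bullet> (x - c))"

lemma hemisphere_pos_iff: "0 < hemisphere c x \<longleftrightarrow> (x - c) \<bullet> (x - c) < 1"
  by (simp add: hemisphere_def)

lemma continuous_on_hemisphere: "continuous_on S (hemisphere c)"
  unfolding hemisphere_def by (intro continuous_intros)

lemma mem_cball_Pair_iff_hemisphere:
  fixes c x :: "'a::real_inner" and zc z :: real
  shows "(x, z) \<in> cball (c, zc) 1 \<longleftrightarrow>
    (x - c) \<bullet> (x - c) \<le> 1 \<and> zc - hemisphere c x \<le> z \<and> z \<le> zc + hemisphere c x"
proof -
  have "dist (c, zc) (x, z) = sqrt ((norm (x - c))\<^sup>2 + (z - zc)\<^sup>2)"
    by (simp add: dist_Pair_Pair dist_norm dist_real_def norm_minus_commute power2_commute norm_Pair)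
  then have "(x, z) \<in> cball (c, zc) 1 \<longleftrightarrow> (z - zc)\<^sup>2 \<le> 1 - (x - c) \<bullet> (x - c)"
    by (simp add: power2_norm_eq_inner, linarith)
  also have "\<dots> \<longleftrightarrow> (x - c) \<bullet> (x - c) \<le> 1 \<and> \<bar>z - zc\<bar> \<le> hemisphere c x"
    unfolding hemisphere_def
    by (smt (verit) abs_le_square_iff real_sqrt_abs real_sqrt_ge_0_iff real_sqrt_le_mono
        real_sqrt_pow2 zero_le_power2)
  finally show ?thesis by auto
qed

lemma has_derivative_hemisphere:
  fixes c p :: "'a::real_inner"
  assumes "(p - c) \<bullet> (p - c) < 1"
  shows "(hemisphere c has_derivative (\<lambda>k. - ((p - c) \<bullet> k) / hemisphere c p)) (at p)"
proof -
  have "((\<lambda>x. (x - c) \<bullet> (x - c)) has_derivative (\<lambda>k. k \<bullet> (p - c) + (p - c) \<bullet> k)) (at p)"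
    by (auto intro!: derivative_eq_intros)
  then have "((\<lambda>x. 1 - (x - c) \<bullet> (x - c)) has_derivative (\<lambda>k. - 2 * ((p - c) \<bullet> k))) (at p)"
    by (auto intro!: derivative_eq_intros simp: inner_commute)
  from has_derivative_real_sqrt[OF _ this] assms show ?thesis
    unfolding hemisphere_def by (simp add: field_simps)
qed

lemma hemisphere_with_gradient:
  fixes p w :: "'a::real_inner"
  obtains c where "0 < hemisphere c p" "(hemisphere c has_derivative (\<lambda>k. w \<bullet> k)) (at p)"
proof
  define \<gamma> where "\<gamma> = 1 / sqrt (1 + w \<bullet> w)"
  have "\<gamma> > 0"
    by (simp add: \<gamma>_def add_pos_nonneg)
  have "0 < 1 + w \<bullet> w"
    by (simp add: add_pos_nonneg)
  then have "\<gamma>\<^sup>2 * (1 + w \<bullet> w) = 1"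
    by (simp add: \<gamma>_def power_divide)
  then have dist_centre: "(\<gamma> *\<^sub>R w) \<bullet> (\<gamma> *\<^sub>R w) = 1 - \<gamma>\<^sup>2"
    by (simp add: power2_eq_square algebra_simps)
  define c where "c = p + \<gamma> *\<^sub>R w"
  have "(p - c) \<bullet> (p - c) = 1 - \<gamma>\<^sup>2"
    using dist_centre by (simp add: c_def)
  moreover have height: "hemisphere c p = \<gamma>"
    using calculation \<open>\<gamma> > 0\<close> by (simp add: hemisphere_def)
  ultimately show "0 < hemisphere c p"
    using \<open>\<gamma> > 0\<close> by simp
  have "(hemisphere c has_derivative (\<lambda>k. - ((p - c) \<bullet> k) / hemisphere c p)) (at p)"
    using \<open>0 < hemisphere c p\<close> by (intro has_derivative_hemisphere) (simp add: hemisphere_pos_iff)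
  moreover have "(\<lambda>k. - ((p - c) \<bullet> k) / hemisphere c p) = (\<lambda>k. w \<bullet> k)"
    using height \<open>\<gamma> > 0\<close> by (simp add: c_def)
  ultimately show "(hemisphere c has_derivative (\<lambda>k. w \<bullet> k)) (at p)"
    by simp
qed

lemma lens_eq_between_caps:
  fixes ca cb :: "'a::real_inner" and za zb :: real
  defines "L \<equiv> cball (ca, za) 1 \<inter> cball (cb, zb) 1"
    and "f \<equiv> \<lambda>x. max (za - hemisphere ca x) (zb - hemisphere cb x)"
    and "g \<equiv> \<lambda>x. min (za + hemisphere ca x) (zb + hemisphere cb x)"
  shows "L = {(x, z). x \<in> fst ` L \<and> f x \<le> z \<and> z \<le> g x}"
proof -
  have mem_L: "(x, z) \<in> L \<longleftrightarrow>
      (x - ca) \<bullet> (x - ca) \<le> 1 \<and> (x - cb) \<bullet> (x - cb) \<le> 1 \<and> f x \<le> z \<and> z \<le> g x" for x z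
    unfolding L_def f_def g_def Int_iff mem_cball_Pair_iff_hemisphere by auto
  show ?thesis
  proof (intro set_eqI iffI)
    fix xz assume "xz \<in> L"
    then show "xz \<in> {(x, z). x \<in> fst ` L \<and> f x \<le> z \<and> z \<le> g x}"
      using mem_L by (cases xz) force
  next
    fix xz assume "xz \<in> {(x, z). x \<in> fst ` L \<and> f x \<le> z \<and> z \<le> g x}"
    then show "xz \<in> L"
      using mem_L by (cases xz) force
  qed
qed

lemma lens_locally_between_caps:
  fixes ca cb p :: "'a::real_inner" and za zb :: real
  defines "L \<equiv> cball (ca, za) 1 \<inter> cball (cb, zb) 1"
    and "f \<equiv> \<lambda>x. max (za - hemisphere ca x) (zb - hemisphere cb x)"
    and "g \<equiv> \<lambda>x. min (za + hemisphere ca x) (zb + hemisphere cb x)"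
  assumes "0 < hemisphere ca p" "0 < hemisphere cb p"
    and "za - hemisphere ca p < zb - hemisphere cb p"
    and "zb - hemisphere cb p < za + hemisphere ca p"
    and "za + hemisphere ca p < zb + hemisphere cb p"
  obtains U where "open U" "p \<in> U" "U \<subseteq> fst ` L"
    "\<And>x. x \<in> U \<Longrightarrow> f x = zb - hemisphere cb x"
    "\<And>x. x \<in> U \<Longrightarrow> g x = za + hemisphere ca x"
proof
  define U where "U = {x. 0 < hemisphere ca x} \<inter> {x. 0 < hemisphere cb x}
    \<inter> {x. za - hemisphere ca x < zb - hemisphere cb x}
    \<inter> {x. zb - hemisphere cb x < za + hemisphere ca x}
    \<inter> {x. za + hemisphere ca x < zb + hemisphere cb x}"
  show "open U"
    unfolding U_def by (intro open_Int open_Collect_less continuous_intros continuous_on_hemisphere)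
  show "p \<in> U"
    using assms(4-) by (simp add: U_def)
  show f_U: "f x = zb - hemisphere cb x" and g_U: "g x = za + hemisphere ca x" if "x \<in> U" for x
    using that by (auto simp: U_def f_def g_def)
  show "U \<subseteq> fst ` L"
  proof
    fix x assume "x \<in> U"
    then have "(x, zb - hemisphere cb x) \<in> L"
      unfolding L_def Int_iff mem_cball_Pair_iff_hemisphere
      by (auto simp: U_def hemisphere_pos_iff)
    then show "x \<in> fst ` L"
      by force
  qed
qed

theorem lemma4p6:
  fixes p u v :: "real ^ 'm"
  shows "\<exists>(a :: (real ^ 'm) \<times> real) (b :: (real ^ 'm) \<times> real)
           (f :: real ^ 'm \<Rightarrow> real) (g :: real ^ 'm \<Rightarrow> real).
           (let L = cball a 1 \<inter> cball b 1 in
              L = {(x, z). x \<in> fst ` L \<and> f x \<le> z \<and> z \<le> g x}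
            \<and> convex_on (fst ` L) f
            \<and> concave_on (fst ` L) g
            \<and> p \<in> interior (fst ` L)
            \<and> (f has_derivative (\<lambda>h. u \<bullet> h)) (at p)
            \<and> (g has_derivative (\<lambda>h. v \<bullet> h)) (at p))"
proof -
  obtain ca where ca: "0 < hemisphere ca p" "(hemisphere ca has_derivative (\<lambda>k. v \<bullet> k)) (at p)"
    using hemisphere_with_gradient .
  obtain cb where cb: "0 < hemisphere cb p" "(hemisphere cb has_derivative (\<lambda>k. - u \<bullet> k)) (at p)"
    using hemisphere_with_gradient .
  define h where "h = max (hemisphere ca p) (hemisphere cb p)"
  define L where "L = cball (ca, 0) 1 \<inter> cball (cb, h) 1"
  define f where "f x = max (0 - hemisphere ca x) (h - hemisphere cb x)" for x
  define g where "g x = min (0 + hemisphere ca x) (h + hemisphere cb x)" for x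
  have L_eq: "L = {(x, z). x \<in> fst ` L \<and> f x \<le> z \<and> z \<le> g x}"
    unfolding L_def f_def g_def by (rule lens_eq_between_caps)
  obtain U where U: "open U" "p \<in> U" "U \<subseteq> fst ` L"
    and f_U: "\<And>x. x \<in> U \<Longrightarrow> f x = h - hemisphere cb x"
    and g_U: "\<And>x. x \<in> U \<Longrightarrow> g x = 0 + hemisphere ca x"
  proof (rule lens_locally_between_caps[of ca p cb 0 h, folded L_def f_def g_def])
    show "0 - hemisphere ca p < h - hemisphere cb p" "h - hemisphere cb p < 0 + hemisphere ca p"
      "0 + hemisphere ca p < h + hemisphere cb p"
      using ca(1) cb(1) by (auto simp: h_def)
  qed (use ca(1) cb(1) in auto)
  have "((\<lambda>x. h - hemisphere cb x) has_derivative (\<lambda>k. u \<bullet> k)) (at p)"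
    using has_derivative_diff[OF has_derivative_const[of h] cb(2)] by simp
  then have "(f has_derivative (\<lambda>k. u \<bullet> k)) (at p)"
    by (rule has_derivative_transform_within_open[OF _ U(1,2)]) (simp add: f_U)
  moreover have "(g has_derivative (\<lambda>k. v \<bullet> k)) (at p)"
    by (rule has_derivative_transform_within_open[OF ca(2) U(1,2)]) (simp add: g_U)
  moreover have "p \<in> interior (fst ` L)"
    using interior_maximal[OF U(3,1)] U(2) by blast
  moreover have "convex_on (fst ` L) f \<and> concave_on (fst ` L) g"
    by (rule convex_between_graphs_imp_convex_concave[OF _ L_eq]) (simp add: L_def convex_Int)
  ultimately show ?thesis
    unfolding Let_def using L_eq by (intro exI[of _ "(ca, 0)"] exI[of _ "(cb, h)"] exI[of _ f] exI[of _ g])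
      (simp add: L_def[symmetric])
qed

end
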